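(* Let $b\in\mathbb{K}_{d,1}$ and $M>0$, and let $t_*$ be as below. There are constants $C_1=C_1(d,\alpha,M)>0$ and $C_2=C_2(d,\alpha,M)>0$ such that for all $a\in(0,M]$, $t\in(0,t_*]$ and $x,y\in\mathbb{R}^d$, $$p^{a,b}(t,x,y)\ge C_1t^{-d/2}\exp\Big(-\frac{C_2|x-y|^2}{t}\Big).$$
   Context: Standing assumption: $d\ge2$, $\alpha\in(0,2)$. $M_b(r)=\sup_x\int_{|x-y|<r}|b(y)||x-y|^{1-d}dy$; $b\in\mathbb{K}_{d,1}$ iff $M_b(r)\to0$ as $r\downarrow0$. $p^a(t,x,y)=p^a(t,x-y)$ with $\int p^a(t,z)e^{iz\cdot\xi}dz=e^{-t(|\xi|^2+a^\alpha|\xi|^\alpha)}$; $p_0^{a,b}=p^a$, $p_k^{a,b}(t,x,y)=\int_0^t\int p_{k-1}^{a,b}(t-s,x,z)b(z)\cdot\nabla_zp^a(s,z,y)dzds$. $q^a_{d,\beta}(t,z)=t^{-d/2}e^{-\beta|z|^2/t}+t^{-d/2}\wedge\frac{a^\alpha t}{|z|^{d+\alpha}}$; $\beta_U>0$ is a constant such that for all $M,T$ there is $C_U>0$ with $p^a\le C_Uq^a_{d,\beta_U}$ on $(0,T]\times\mathbb{R}^d$ for $a\in(0,M]$. $t_*=t_*(d,\alpha,M,b)>0$ and $C_0=C_0(d,\alpha,M)\ge1$ are constants such that for all $a\in(0,M]$, $t\in(0,t_*]$, $x,y$: $\sum_k|p_k^{a,b}(t,x,y)|\le C_0q^a_{d,\beta_U/2}(t,x-y)$,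 and $\sum_kp_k^{a,b}(t,x,y)\ge C_0^{-1}t^{-d/2}$ whenever $|x-y|^2<t$. $p^{a,b}$ is the jointly continuous, nonnegative kernel equal to $\sum_kp_k^{a,b}$ on $(0,t_*]\times\mathbb{R}^d\times\mathbb{R}^d$ and satisfying Chapman–Kolmogorov $p^{a,b}(t+s,x,y)=\int p^{a,b}(t,x,z)p^{a,b}(s,z,y)dz$ for all $t,s>0$. *)

theory Defs
  imports "HOL-Analysis.Analysis"
begin

text \<open>Dimension d = CARD('n); points of R^d are of type real^'n.\<close>

definition kato_M :: "(real^'n \<Rightarrow> real^'n) \<Rightarrow> real \<Rightarrow> ennreal" where
  "kato_M b r = (SUP x. \<integral>\<^sup>+ y. ennreal (indicator (ball x r) y * norm (b y)
       * dist x y powr (1 - real CARD('n))) \<partial>lborel)"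

definition kato_class :: "(real^'n \<Rightarrow> real^'n) set" where
  "kato_class = {b. b \<in> borel_measurable borel \<and> (kato_M b \<longlongrightarrow> 0) (at_right 0)}"

text \<open>Heat kernel p^a(t,z) of Delta + a^alpha Delta^{alpha/2}, by Fourier inversion of
  exp(-t(|xi|^2 + a^alpha |xi|^alpha)) (which is even, so only the cosine part remains).\<close>
definition pa :: "real \<Rightarrow> real \<Rightarrow> real \<Rightarrow> real^'n \<Rightarrow> real" where
  "pa \<alpha> a t z = (1 / (2 * pi) ^ CARD('n)) *
     (\<integral> \<xi>. exp (- t * ((norm \<xi>)\<^sup>2 + a powr \<alpha> * norm \<xi> powr \<alpha>)) * cos (inner z \<xi>) \<partial>lborel)"

definition grad :: "(real^'n \<Rightarrow> real) \<Rightarrow> real^'n \<Rightarrow> real^'n" where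
  "grad f x = (THE D. GDERIV f x :> D)"

primrec pk :: "real \<Rightarrow> real \<Rightarrow> (real^'n \<Rightarrow> real^'n) \<Rightarrow> nat \<Rightarrow> real \<Rightarrow> real^'n \<Rightarrow> real^'n \<Rightarrow> real" where
  "pk \<alpha> a b 0 = (\<lambda>t x y. pa \<alpha> a t (x - y))"
| "pk \<alpha> a b (Suc k) = (\<lambda>t x y.
     \<integral> s. indicator {0<..<t} s *
        (\<integral> z. pk \<alpha> a b k (t - s) x z * inner (b z) (grad (\<lambda>w. pa \<alpha> a s (w - y)) z) \<partial>lborel) \<partial>lborel)"

text \<open>q^a_{d,beta}(t,z); at z = 0 the term t^{-d/2} /\ a^alpha t/|z|^{d+alpha} equals t^{-d/2}.\<close>
definition qa :: "real \<Rightarrow> real \<Rightarrow> real \<Rightarrow> real \<Rightarrow> real^'n \<Rightarrow> real" where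
  "qa \<alpha> a \<beta> t z = t powr (- real CARD('n) / 2) * exp (- \<beta> * (norm z)\<^sup>2 / t)
     + (if z = 0 then t powr (- real CARD('n) / 2)
        else min (t powr (- real CARD('n) / 2)) (a powr \<alpha> * t / norm z powr (real CARD('n) + \<alpha>)))"

end

theory Submission
  imports Defs
begin

text \<open>Near the diagonal, |x - y|^2 < t, the kernel is at least c t^(-d/2). Otherwise split t into
  n ~ 4 |x - y|^2 / t steps of length tau = t / n, so that x and y are joined by n hops of length at
  most sqrt tau / 2. Applying Chapman-Kolmogorov with the intermediate point restricted to a ball of
  radius sqrt tau / 4 centred on the segment costs one factor gamma = c omega_d 4^(-d) per hop, so
  p(t,x,y) >= c tau^(-d/2) gamma^(n-1) >= c gamma t^(-d/2) gamma^(4 |x - y|^2 / t).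
  The upper bound C0 q only serves to make the Chapman-Kolmogorov integrands integrable:
  q(t, .) decays like |z|^(-d-alpha).\<close>

lemma exists_dyadic_powr_bound:
  fixes e r :: real
  assumes e: "e \<ge> 0" and r: "r \<ge> 1"
  shows "\<exists>j::nat. r < 2 ^ j \<and> r powr (- e) \<le> 2 powr e * 2 powr (- e * real j)"
proof -
  define k where "k = \<lfloor>log 2 r\<rfloor>"
  have k: "2 powr k \<le> r" "r < 2 powr (k + 1)"
    using floor_log_eq_powr_iff[of r 2 k] r by (auto simp: k_def)
  have "k \<ge> 0" using r by (simp add: k_def)
  then have j: "(2::real) ^ nat (k + 1) = 2 powr (k + 1)"
    by (simp add: powr_realpow[symmetric])
  have "r powr (- e) \<le> (2 powr k) powr (- e)"
    using k e by (intro powr_mono2') auto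
  also have "\<dots> = 2 powr e * 2 powr (- e * real (nat (k + 1)))"
    using \<open>k \<ge> 0\<close> by (simp add: powr_powr powr_add[symmetric] algebra_simps)
  finally show ?thesis using k j by (intro exI[of _ "nat (k + 1)"]) simp
qed

lemma borel_measurable_dyadic_ball_weight:
  fixes u :: "'a::euclidean_space"
  shows "(\<lambda>z. ennreal (2 powr (- e * real j) * indicator (ball u (2 ^ j)) z)) \<in> borel_measurable lborel"
proof -
  have "(\<lambda>z. 2 powr (- e * real j) * indicat_real (ball u (2 ^ j)) z) \<in> borel_measurable lborel"
    by (intro borel_measurable_times borel_measurable_const borel_measurable_indicator) simp
  then show ?thesis by (rule measurable_compose) simp
qed

lemma nn_integral_dyadic_balls_finite:
  fixes u :: "'a::euclidean_space" and e :: real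
  assumes e: "e > DIM('a)"
  shows "(\<integral>\<^sup>+z. (\<Sum>j. ennreal (2 powr (- e * real j) * indicator (ball u (2 ^ j)) z)) \<partial>lborel) < \<infinity>"
proof -
  define q where "q = (2::real) powr (DIM('a) - e)"
  have q: "0 < q" "q < 1"
    using e unfolding q_def by (auto intro!: powr_less_one)
  have ball: "(\<integral>\<^sup>+z. ennreal (2 powr (- e * real j) * indicator (ball u (2 ^ j)) z) \<partial>lborel)
      = ennreal (unit_ball_vol DIM('a) * q ^ j)" for j
  proof -
    have "(\<integral>\<^sup>+z. ennreal (2 powr (- e * real j) * indicator (ball u (2 ^ j)) z) \<partial>lborel)
        = (\<integral>\<^sup>+z. ennreal (2 powr (- e * real j)) * indicator (ball u (2 ^ j)) z \<partial>lborel)"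
      by (intro nn_integral_cong) (simp split: split_indicator)
    also have "\<dots> = ennreal (2 powr (- e * real j)) * emeasure lborel (ball u (2 ^ j))"
      by (rule nn_integral_cmult_indicator) simp
    also have "\<dots> = ennreal (2 powr (- e * real j) * (unit_ball_vol DIM('a) * (2 ^ j) ^ DIM('a)))"
      by (simp add: emeasure_ball ennreal_mult)
    also have "2 powr (- e * real j) * (unit_ball_vol DIM('a) * (2 ^ j) ^ DIM('a))
        = unit_ball_vol DIM('a) * q ^ j"
    proof -
      have "((2::real) ^ j) ^ DIM('a) = 2 powr (real j * DIM('a))"
        by (simp add: powr_realpow[symmetric] powr_powr)
      moreover have "q ^ j = 2 powr ((DIM('a) - e) * real j)"
        by (simp add: q_def powr_realpow[symmetric] powr_powr)
      moreover have "2 powr (- e * real j) * 2 powr (real j * DIM('a)) = (2::real) powr ((DIM('a) - e) * real j)"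
        by (simp add: powr_add[symmetric] algebra_simps)
      ultimately show ?thesis by (simp only: mult_ac)
    qed
    finally show ?thesis .
  qed
  have "(\<integral>\<^sup>+z. (\<Sum>j. ennreal (2 powr (- e * real j) * indicator (ball u (2 ^ j)) z)) \<partial>lborel)
      = (\<Sum>j. \<integral>\<^sup>+z. ennreal (2 powr (- e * real j) * indicator (ball u (2 ^ j)) z) \<partial>lborel)"
    by (rule nn_integral_suminf) (rule borel_measurable_dyadic_ball_weight)
  also have "\<dots> = (\<Sum>j. ennreal (unit_ball_vol DIM('a) * q ^ j))"
    by (simp only: ball)
  also have "\<dots> = ennreal (\<Sum>j. unit_ball_vol DIM('a) * q ^ j)"
    using q by (intro suminf_ennreal2) (auto intro!: summable_mult summable_geometric)
  finally show ?thesis by simp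
qed

lemma integrable_bounded_with_power_decay:
  fixes f :: "'a::euclidean_space \<Rightarrow> real" and u :: 'a and e K :: real
  assumes meas: "f \<in> borel_measurable lborel" and nonneg: "\<And>z. 0 \<le> f z"
    and e: "e > DIM('a)" and K: "K \<ge> 0"
    and near: "\<And>z. dist z u < 1 \<Longrightarrow> f z \<le> K"
    and far: "\<And>z. dist z u \<ge> 1 \<Longrightarrow> f z \<le> K * dist z u powr (- e)"
  shows "integrable lborel f"
proof -
  define g where "g z = (\<Sum>j. ennreal (2 powr (- e * real j) * indicator (ball u (2 ^ j)) z))" for z
  have dom: "ennreal (f z) \<le> ennreal (K * 2 powr e) * g z" for z
  proof -
    obtain j :: nat where j: "z \<in> ball u (2 ^ j)" "f z \<le> K * 2 powr e * 2 powr (- e * real j)"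
    proof (cases "dist z u < 1")
      case True
      have "1 \<le> (2::real) powr e" using e by (intro ge_one_powr_ge_zero) auto
      then have "K \<le> K * 2 powr e" using K by (simp add: mult_le_cancel_left1)
      with True near[of z] show ?thesis by (intro that[of 0]) (simp_all add: dist_commute)
    next
      case False
      then obtain j :: nat where j: "dist z u < 2 ^ j" "dist z u powr (- e) \<le> 2 powr e * 2 powr (- e * real j)"
        using exists_dyadic_powr_bound[of e "dist z u"] e by auto
      moreover have "f z \<le> K * (2 powr e * 2 powr (- e * real j))"
        using far[of z] False mult_left_mono[OF j(2) K] by linarith
      ultimately show ?thesis by (intro that[of j]) (simp_all add: dist_commute mult.assoc)
    qed
    then have "ennreal (f z) \<le> ennreal (K * 2 powr e * (2 powr (- e * real j) * indicator (ball u (2 ^ j)) z))"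
      by (intro ennreal_leI) (simp add: mult.assoc)
    also have "\<dots> = ennreal (K * 2 powr e) * ennreal (2 powr (- e * real j) * indicator (ball u (2 ^ j)) z)"
      using K by (intro ennreal_mult) auto
    also have "\<dots> \<le> ennreal (K * 2 powr e) * g z"
    proof (intro mult_left_mono)
      define F where "F i = ennreal (2 powr (- e * real i) * indicator (ball u (2 ^ i)) z)" for i
      have "F j \<le> (\<Sum>i. F i)"
        using sum_le_suminf[of F "{j}"] by (simp add: summableI)
      then show "ennreal (2 powr (- e * real j) * indicator (ball u (2 ^ j)) z) \<le> g z"
        unfolding F_def g_def .
    qed (rule zero_le)
    finally show ?thesis .
  qed
  have "(\<integral>\<^sup>+z. ennreal (f z) \<partial>lborel) \<le> (\<integral>\<^sup>+z. ennreal (K * 2 powr e) * g z \<partial>lborel)"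
    by (intro nn_integral_mono dom)
  also have "\<dots> = ennreal (K * 2 powr e) * (\<integral>\<^sup>+z. g z \<partial>lborel)"
    unfolding g_def
    by (intro nn_integral_cmult borel_measurable_suminf_order borel_measurable_dyadic_ball_weight)
  also have "\<dots> < \<infinity>"
    using nn_integral_dyadic_balls_finite[OF e, of u] by (simp add: g_def ennreal_mult_less_top)
  finally show ?thesis
    by (intro integrableI_nonneg) (use meas nonneg in auto)
qed

lemma exists_ball_splitting_distance:
  fixes x y :: "'a::real_normed_vector" and r k :: real
  assumes r: "r > 0" and k: "k \<ge> 1" and xy: "norm (x - y) \<le> (k + 1) * r"
  shows "\<exists>m. \<forall>z\<in>ball m (r / 2). norm (x - z) \<le> k * r \<and> norm (z - y) < 2 * r"
proof (cases "norm (x - y) \<le> 3 * r / 2")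
  case True
  show ?thesis
  proof (intro exI ballI conjI)
    fix z assume "z \<in> ball x (r / 2)"
    then have xz: "norm (x - z) < r / 2" by (simp add: dist_norm)
    moreover have "r \<le> k * r" using k r by simp
    ultimately show "norm (x - z) \<le> k * r" using r by linarith
    have "norm (z - y) \<le> norm (x - z) + norm (x - y)"
      by (metis norm_diff_triangle_le norm_minus_commute order_refl)
    then show "norm (z - y) < 2 * r" using True xz by linarith
  qed
next
  case False
  define d where "d = norm (x - y)"
  define l where "l = 3 * r / (2 * d)"
  define m where "m = y + l *\<^sub>R (x - y)"
  have d: "d > 3 * r / 2" using False by (simp add: d_def)
  have l: "0 \<le> l" "l \<le> 1" using d r by (auto simp: l_def field_simps)
  have my: "norm (m - y) = 3 * r / 2"
    using l d r by (simp add: m_def d_def[symmetric] l_def)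
  have "x - m = (1 - l) *\<^sub>R (x - y)" by (simp add: m_def algebra_simps)
  then have "norm (x - m) = (1 - l) * d" using l by (simp add: d_def)
  then have xm: "norm (x - m) = d - 3 * r / 2" using d r by (simp add: l_def algebra_simps)
  show ?thesis
  proof (intro exI[of _ m] ballI conjI)
    fix z assume "z \<in> ball m (r / 2)"
    then have mz: "norm (m - z) < r / 2" by (simp add: dist_norm)
    have "norm (x - z) \<le> norm (x - m) + norm (m - z)" by (rule norm_diff_triangle_le[of _ m]) simp_all
    then show "norm (x - z) \<le> k * r" using xm mz xy by (simp add: d_def algebra_simps)
    have "norm (z - y) \<le> norm (m - z) + norm (m - y)"
      by (metis norm_diff_triangle_le norm_minus_commute order_refl)
    then show "norm (z - y) < 2 * r" using my mz by linarith
  qed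
qed

lemma kernel_lower_bound_on_ball:
  fixes p :: "real \<Rightarrow> 'a::euclidean_space \<Rightarrow> 'a \<Rightarrow> real"
  assumes CK: "p (s + \<tau>) x y = (\<integral>z. p s x z * p \<tau> z y \<partial>lborel)"
    and int: "integrable lborel (\<lambda>z. p s x z * p \<tau> z y)"
    and nonneg: "\<And>z. 0 \<le> p s x z" "\<And>z. 0 \<le> p \<tau> z y"
    and lower: "\<And>z. z \<in> ball m \<rho> \<Longrightarrow> A \<le> p s x z \<and> B \<le> p \<tau> z y"
    and AB: "0 \<le> A" "0 \<le> B" and \<rho>: "0 \<le> \<rho>"
  shows "A * B * (unit_ball_vol DIM('a) * \<rho> ^ DIM('a)) \<le> p (s + \<tau>) x y"
proof -
  have below: "A * B * indicator (ball m \<rho>) z \<le> p s x z * p \<tau> z y" for z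
    using lower[of z] nonneg[of z] AB by (auto simp: indicator_def intro: mult_mono)
  have "A * B * (unit_ball_vol DIM('a) * \<rho> ^ DIM('a)) = (\<integral>z. A * B * indicator (ball m \<rho>) z \<partial>lborel)"
    using \<rho> by (simp add: content_ball)
  also have "\<dots> \<le> (\<integral>z. p s x z * p \<tau> z y \<partial>lborel)"
    using emeasure_lborel_ball_finite[of m \<rho>] by (intro integral_mono below int) auto
  finally show ?thesis using CK by simp
qed

lemma powr_mult_ball_volume_sqrt:
  fixes \<tau> :: real
  assumes "\<tau> > 0"
  shows "\<tau> powr (- real d / 2) * (unit_ball_vol d * (sqrt \<tau> / 4) ^ d) = unit_ball_vol d / 4 ^ d"
proof -
  have "sqrt \<tau> ^ d = \<tau> powr (d / 2)"
    using assms by (simp add: powr_half_sqrt[symmetric] powr_power)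
  moreover have "\<tau> powr (- real d / 2) * \<tau> powr (d / 2) = 1"
    using assms by (simp add: powr_add[symmetric])
  ultimately show ?thesis by (simp add: power_divide)
qed

lemma kernel_lower_bound_by_chaining:
  fixes p :: "real \<Rightarrow> 'a::euclidean_space \<Rightarrow> 'a \<Rightarrow> real" and T c \<tau> :: real
  assumes nonneg: "\<And>t x y. t > 0 \<Longrightarrow> 0 \<le> p t x y"
    and CK: "\<And>t s x y. t > 0 \<Longrightarrow> s > 0 \<Longrightarrow> p (t + s) x y = (\<integral>z. p t x z * p s z y \<partial>lborel)"
    and int: "\<And>t s x y. 0 < t \<Longrightarrow> t \<le> T \<Longrightarrow> 0 < s \<Longrightarrow> s \<le> T \<Longrightarrow>
      integrable lborel (\<lambda>z. p t x z * p s z y)"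
    and diag: "\<And>t x y. 0 < t \<Longrightarrow> t \<le> T \<Longrightarrow> (norm (x - y))\<^sup>2 < t \<Longrightarrow>
      c * t powr (- real DIM('a) / 2) \<le> p t x y"
    and c: "c > 0" and \<tau>: "\<tau> > 0"
  shows "k \<ge> 1 \<Longrightarrow> real k * \<tau> \<le> T \<Longrightarrow> norm (x - y) \<le> real k * sqrt \<tau> / 2 \<Longrightarrow>
    c * \<tau> powr (- real DIM('a) / 2) * (c * unit_ball_vol DIM('a) / 4 ^ DIM('a)) ^ (k - 1) \<le> p (real k * \<tau>) x y"
proof (induction k arbitrary: x y rule: nat_induct_at_least)
  case base
  have "norm (x - y) \<le> sqrt \<tau> / 2" using base.prems(2) by simp
  moreover have "sqrt \<tau> > 0" using \<tau> by simp
  ultimately have "norm (x - y) < sqrt \<tau>" by linarith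
  then have "(norm (x - y))\<^sup>2 < \<tau>" using power_strict_mono[of _ _ 2] \<tau> by force
  then show ?case using diag[OF \<tau>] base.prems(1) by simp
next
  case (Suc k)
  define B where "B = c * \<tau> powr (- real DIM('a) / 2)"
  define \<gamma> where "\<gamma> = c * unit_ball_vol DIM('a) / 4 ^ DIM('a)"
  define r where "r = sqrt \<tau> / 2"
  have r: "r > 0" using \<tau> by (simp add: r_def)
  have "0 \<le> \<tau> * real k" using \<tau> by simp
  then have \<tau>T: "\<tau> \<le> T" using Suc.prems(1) by (simp add: algebra_simps)
  have kT: "real k * \<tau> \<le> T" using Suc.prems(1) \<tau> by (simp add: algebra_simps)
  have k\<tau>: "real k * \<tau> > 0" using Suc.hyps \<tau> by simp
  have "\<exists>m. \<forall>z\<in>ball m (r / 2). norm (x - z) \<le> real k * r \<and> norm (z - y) < 2 * r"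
    using Suc.hyps Suc.prems(2)
    by (intro exists_ball_splitting_distance[OF r]) (simp_all add: r_def algebra_simps)
  then obtain m where m: "\<And>z. z \<in> ball m (r / 2) \<Longrightarrow> norm (x - z) \<le> real k * r \<and> norm (z - y) < 2 * r"
    by blast
  have "B * \<gamma> ^ (k - 1) * B * (unit_ball_vol DIM('a) * (r / 2) ^ DIM('a)) \<le> p (real k * \<tau> + \<tau>) x y"
  proof (rule kernel_lower_bound_on_ball[OF CK[OF k\<tau> \<tau>] int[OF k\<tau> kT \<tau> \<tau>T]])
    fix z assume z: "z \<in> ball m (r / 2)"
    have xz: "norm (x - z) \<le> real k * sqrt \<tau> / 2" and zy: "norm (z - y) < sqrt \<tau>"
      using m[OF z] by (simp_all add: r_def)
    from zy have "(norm (z - y))\<^sup>2 < \<tau>" using power_strict_mono[of _ _ 2] \<tau> by force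
    then show "B * \<gamma> ^ (k - 1) \<le> p (real k * \<tau>) x z \<and> B \<le> p \<tau> z y"
      using Suc.IH[OF kT xz] diag[OF \<tau> \<tau>T] unfolding B_def \<gamma>_def by simp
  qed (use nonneg k\<tau> \<tau> c r in \<open>simp_all add: B_def \<gamma>_def\<close>)
  moreover have "B * (unit_ball_vol DIM('a) * (r / 2) ^ DIM('a)) = \<gamma>"
  proof -
    have "r / 2 = sqrt \<tau> / 4" by (simp add: r_def)
    then have "B * (unit_ball_vol DIM('a) * (r / 2) ^ DIM('a))
        = c * (\<tau> powr (- real DIM('a) / 2) * (unit_ball_vol DIM('a) * (sqrt \<tau> / 4) ^ DIM('a)))"
      by (simp only: B_def mult.assoc)
    also have "\<dots> = \<gamma>"
      by (simp only: powr_mult_ball_volume_sqrt[OF \<tau>] \<gamma>_def times_divide_eq_right)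
    finally show ?thesis .
  qed
  ultimately have "B * (\<gamma> ^ (k - 1) * \<gamma>) \<le> p (real k * \<tau> + \<tau>) x y"
    by (metis mult.assoc)
  moreover have "\<gamma> ^ (k - 1) * \<gamma> = \<gamma> ^ (Suc k - 1)" using Suc.hyps by (cases k) simp_all
  moreover have "real k * \<tau> + \<tau> = real (Suc k) * \<tau>" by (simp add: algebra_simps)
  ultimately have "B * \<gamma> ^ (Suc k - 1) \<le> p (real (Suc k) * \<tau>) x y" by metis
  then show ?case unfolding B_def \<gamma>_def .
qed

lemma gaussian_lower_bound_by_chaining:
  fixes p :: "real \<Rightarrow> 'a::euclidean_space \<Rightarrow> 'a \<Rightarrow> real" and T c \<gamma> t :: real
  assumes nonneg: "\<And>t x y. t > 0 \<Longrightarrow> 0 \<le> p t x y"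
    and CK: "\<And>t s x y. t > 0 \<Longrightarrow> s > 0 \<Longrightarrow> p (t + s) x y = (\<integral>z. p t x z * p s z y \<partial>lborel)"
    and int: "\<And>t s x y. 0 < t \<Longrightarrow> t \<le> T \<Longrightarrow> 0 < s \<Longrightarrow> s \<le> T \<Longrightarrow>
      integrable lborel (\<lambda>z. p t x z * p s z y)"
    and diag: "\<And>t x y. 0 < t \<Longrightarrow> t \<le> T \<Longrightarrow> (norm (x - y))\<^sup>2 < t \<Longrightarrow>
      c * t powr (- real DIM('a) / 2) \<le> p t x y"
    and c: "c > 0"
    and \<gamma>: "0 < \<gamma>" "\<gamma> < 1" "\<gamma> \<le> c * unit_ball_vol DIM('a) / 4 ^ DIM('a)"
    and t: "0 < t" "t \<le> T"
  shows "c * \<gamma> * t powr (- real DIM('a) / 2) * \<gamma> powr (4 * (norm (x - y))\<^sup>2 / t) \<le> p t x y"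
proof -
  define \<delta> where "\<delta> = 4 * (norm (x - y))\<^sup>2 / t"
  define n :: nat where "n = nat \<lceil>\<delta>\<rceil> + 1"
  define \<tau> where "\<tau> = t / real n"
  have \<delta>: "\<delta> \<ge> 0" using t by (simp add: \<delta>_def)
  have n: "n \<ge> 1" "\<delta> \<le> real n" "real n - 1 \<le> \<delta> + 1"
    using \<delta> by (auto simp: n_def) linarith+
  have \<tau>: "\<tau> > 0" "real n * \<tau> = t" "\<tau> \<le> t"
    using t n by (auto simp: \<tau>_def field_simps)
  have "(norm (x - y))\<^sup>2 \<le> (real n * sqrt \<tau> / 2)\<^sup>2"
  proof -
    have "(norm (x - y))\<^sup>2 = \<delta> * t / 4" using t by (simp add: \<delta>_def)
    also have "\<dots> \<le> real n * (real n * \<tau>) / 4" using n t \<tau> by (simp add: mult_right_mono)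
    also have "\<dots> = (real n * sqrt \<tau> / 2)\<^sup>2"
      using \<tau> by (simp add: power2_eq_square power_mult_distrib algebra_simps)
    finally show ?thesis .
  qed
  then have "norm (x - y) \<le> real n * sqrt \<tau> / 2"
    by (rule power2_le_imp_le) (use \<tau> in simp)
  then have chain: "c * \<tau> powr (- real DIM('a) / 2) * (c * unit_ball_vol DIM('a) / 4 ^ DIM('a)) ^ (n - 1) \<le> p t x y"
    using kernel_lower_bound_by_chaining[OF nonneg CK int diag c \<tau>(1) n(1)] \<tau> t by simp
  have "\<gamma> * \<gamma> powr \<delta> = \<gamma> powr (\<delta> + 1)" using \<gamma> by (simp add: powr_add)
  also have "\<dots> \<le> \<gamma> powr (real n - 1)" using \<gamma> n by (intro powr_mono') auto
  also have "\<dots> = \<gamma> ^ (n - 1)" using \<gamma> n by (simp add: powr_realpow[symmetric] of_nat_diff)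
  also have "\<dots> \<le> (c * unit_ball_vol DIM('a) / 4 ^ DIM('a)) ^ (n - 1)" using \<gamma> by (intro power_mono) auto
  finally have "\<gamma> * \<gamma> powr \<delta> \<le> (c * unit_ball_vol DIM('a) / 4 ^ DIM('a)) ^ (n - 1)" .
  moreover have "t powr (- real DIM('a) / 2) \<le> \<tau> powr (- real DIM('a) / 2)"
    using \<tau> by (intro powr_mono2') auto
  ultimately have "c * t powr (- real DIM('a) / 2) * (\<gamma> * \<gamma> powr \<delta>)
      \<le> c * \<tau> powr (- real DIM('a) / 2) * (c * unit_ball_vol DIM('a) / 4 ^ DIM('a)) ^ (n - 1)"
    using c \<gamma> by (intro mult_mono mult_left_mono) auto
  with chain show ?thesis by (simp add: \<delta>_def mult_ac)
qed

lemma exp_neg_le_powr: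
  fixes y n :: real
  assumes y: "y > 0" and n: "n > 0"
  shows "exp (- y) \<le> (n / y) powr n"
proof -
  have "y / n \<le> exp (y / n)" using exp_ge_add_one_self[of "y / n"] by linarith
  then have "(y / n) powr n \<le> exp (y / n) powr n" using y n by (intro powr_mono2) auto
  also have "exp (y / n) powr n = exp y" using n by (simp add: powr_def)
  finally have "inverse (exp y) \<le> inverse ((y / n) powr n)"
    using y n by (intro le_imp_inverse_le) auto
  then show ?thesis using y n by (simp add: exp_minus powr_divide)
qed

lemma qa_le_uniform:
  fixes v :: "real^'n"
  assumes "t > 0" "\<beta> \<ge> 0"
  shows "qa \<alpha> a \<beta> t v \<le> 2 * t powr (- real CARD('n) / 2)"
proof -
  have "exp (- \<beta> * (norm v)\<^sup>2 / t) \<le> 1" using assms by (simp add: divide_nonneg_pos)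
  then have "t powr (- real CARD('n) / 2) * exp (- \<beta> * (norm v)\<^sup>2 / t) \<le> t powr (- real CARD('n) / 2)"
    by (simp add: mult_left_le)
  moreover have "(if v = 0 then t powr (- real CARD('n) / 2)
      else min (t powr (- real CARD('n) / 2)) (a powr \<alpha> * t / norm v powr (CARD('n) + \<alpha>)))
    \<le> t powr (- real CARD('n) / 2)" by simp
  ultimately show ?thesis unfolding qa_def by linarith
qed

lemma qa_le_power_decay:
  fixes v :: "real^'n" and \<alpha> \<beta> a t :: real
  assumes t: "t > 0" and \<beta>: "\<beta> > 0" and \<alpha>: "\<alpha> > 0" and v: "v \<noteq> 0"
  defines "e \<equiv> real CARD('n) + \<alpha>"
  shows "qa \<alpha> a \<beta> t v \<le> (t powr (- real CARD('n) / 2) * (e * t / (2 * \<beta>)) powr (e / 2) + a powr \<alpha> * t)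
    * norm v powr (- e)"
proof -
  define r where "r = norm v"
  have r: "r > 0" using v by (simp add: r_def)
  have e: "e > 0" using \<alpha> by (simp add: e_def)
  have "\<beta> * r\<^sup>2 / t > 0" using r t \<beta> by simp
  then have "exp (- (\<beta> * r\<^sup>2 / t)) \<le> (e / 2 / (\<beta> * r\<^sup>2 / t)) powr (e / 2)"
    by (rule exp_neg_le_powr) (use e in simp)
  also have "e / 2 / (\<beta> * r\<^sup>2 / t) = (e * t / (2 * \<beta>)) * r powr (-2)"
    using r t \<beta> by (simp add: powr_minus_divide powr_realpow field_simps)
  also have "((e * t / (2 * \<beta>)) * r powr (-2)) powr (e / 2) = (e * t / (2 * \<beta>)) powr (e / 2) * r powr (- e)"
    using r t \<beta> e by (subst powr_mult) (auto simp: powr_powr)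
  finally have gauss: "exp (- \<beta> * r\<^sup>2 / t) \<le> (e * t / (2 * \<beta>)) powr (e / 2) * r powr (- e)"
    by simp
  have stable: "min (t powr (- real CARD('n) / 2)) (a powr \<alpha> * t / r powr e) \<le> a powr \<alpha> * t * r powr (- e)"
  proof -
    have "a powr \<alpha> * t / r powr e = a powr \<alpha> * t * r powr (- e)"
      by (simp add: powr_minus_divide)
    then show ?thesis by (simp only: min.coboundedI2 order_refl)
  qed
  have "qa \<alpha> a \<beta> t v
      = t powr (- real CARD('n) / 2) * exp (- \<beta> * r\<^sup>2 / t) + min (t powr (- real CARD('n) / 2)) (a powr \<alpha> * t / r powr e)"
    using v by (simp add: qa_def r_def e_def)
  also have "\<dots> \<le> t powr (- real CARD('n) / 2) * ((e * t / (2 * \<beta>)) powr (e / 2) * r powr (- e)) + a powr \<alpha> * t * r powr (- e)"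
    using gauss stable by (intro add_mono mult_left_mono) auto
  finally show ?thesis by (simp add: r_def algebra_simps)
qed

lemma integrable_qa_dominated:
  fixes f :: "real^'n \<Rightarrow> real" and u :: "real^'n" and \<alpha> \<beta> a t K :: real
  assumes meas: "f \<in> borel_measurable lborel" and nonneg: "\<And>z. 0 \<le> f z"
    and bound: "\<And>z. f z \<le> K * qa \<alpha> a \<beta> t (u - z)"
    and K: "K \<ge> 0" and t: "t > 0" and \<beta>: "\<beta> > 0" and \<alpha>: "\<alpha> > 0"
  shows "integrable lborel f"
proof -
  define e where "e = real CARD('n) + \<alpha>"
  define D where "D = t powr (- real CARD('n) / 2) * (e * t / (2 * \<beta>)) powr (e / 2) + a powr \<alpha> * t"
  have D: "D \<ge> 0" using t by (simp add: D_def)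
  show ?thesis
  proof (rule integrable_bounded_with_power_decay[OF meas nonneg])
    show "real DIM(real^'n) < e" using \<alpha> by (simp add: e_def)
    show "0 \<le> K * max (2 * t powr (- real CARD('n) / 2)) D" using K D by simp
    show "f z \<le> K * max (2 * t powr (- real CARD('n) / 2)) D" for z
    proof -
      have "f z \<le> K * (2 * t powr (- real CARD('n) / 2))"
        using bound[of z] mult_left_mono[OF qa_le_uniform[OF t, of \<beta> \<alpha> a "u - z"] K] \<beta> by simp
      also have "\<dots> \<le> K * max (2 * t powr (- real CARD('n) / 2)) D" using K by (intro mult_left_mono) auto
      finally show ?thesis .
    qed
    show "f z \<le> K * max (2 * t powr (- real CARD('n) / 2)) D * dist z u powr (- e)"
      if "dist z u \<ge> 1" for z
    proof -
      have "u - z \<noteq> 0" and norm: "norm (u - z) = dist z u" using that by (auto simp: dist_norm norm_minus_commute)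
      then have "qa \<alpha> a \<beta> t (u - z) \<le> D * dist z u powr (- e)"
        using qa_le_power_decay[OF t \<beta> \<alpha>, of "u - z" a] by (simp add: D_def e_def)
      also have "\<dots> \<le> max (2 * t powr (- real CARD('n) / 2)) D * dist z u powr (- e)"
        by (intro mult_right_mono) auto
      finally show ?thesis using bound[of z] K by (smt (verit) mult.assoc mult_left_mono)
    qed
  qed
qed

lemma gaussian_lower_bound_of_qa_bounded_kernel:
  fixes p :: "real \<Rightarrow> real^'n \<Rightarrow> real^'n \<Rightarrow> real" and T C c \<gamma> t \<alpha> \<beta> a :: real
  assumes cont: "continuous_on ({0<..} \<times> UNIV \<times> UNIV) (\<lambda>(t, x, y). p t x y)"
    and nonneg: "\<And>t x y. t > 0 \<Longrightarrow> 0 \<le> p t x y"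
    and CK: "\<And>t s x y. t > 0 \<Longrightarrow> s > 0 \<Longrightarrow> p (t + s) x y = (\<integral>z. p t x z * p s z y \<partial>lborel)"
    and upper: "\<And>t x y. 0 < t \<Longrightarrow> t \<le> T \<Longrightarrow> p t x y \<le> C * qa \<alpha> a \<beta> t (x - y)"
    and diag: "\<And>t x y. 0 < t \<Longrightarrow> t \<le> T \<Longrightarrow> (norm (x - y))\<^sup>2 < t \<Longrightarrow>
      c * t powr (- real CARD('n) / 2) \<le> p t x y"
    and C: "C \<ge> 0" and \<alpha>: "\<alpha> > 0" and \<beta>: "\<beta> > 0" and c: "c > 0"
    and \<gamma>: "0 < \<gamma>" "\<gamma> < 1" "\<gamma> \<le> c * unit_ball_vol CARD('n) / 4 ^ CARD('n)"
    and t: "0 < t" "t \<le> T"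
  shows "c * \<gamma> * t powr (- real CARD('n) / 2) * \<gamma> powr (4 * (norm (x - y))\<^sup>2 / t) \<le> p t x y"
proof -
  have meas: "(\<lambda>z. p s x' z) \<in> borel_measurable lborel" "(\<lambda>z. p s z y') \<in> borel_measurable lborel"
    if "s > 0" for s x' y'
  proof -
    have "continuous_on UNIV (\<lambda>z. (\<lambda>(t, x, y). p t x y) (s, x', z))"
      by (rule continuous_on_compose2[OF cont]) (use that in \<open>auto intro!: continuous_intros\<close>)
    moreover have "continuous_on UNIV (\<lambda>z. (\<lambda>(t, x, y). p t x y) (s, z, y'))"
      by (rule continuous_on_compose2[OF cont]) (use that in \<open>auto intro!: continuous_intros\<close>)
    ultimately show "(\<lambda>z. p s x' z) \<in> borel_measurable lborel" "(\<lambda>z. p s z y') \<in> borel_measurable lborel"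
      by (simp_all add: borel_measurable_continuous_onI)
  qed
  have int: "integrable lborel (\<lambda>z. p s x' z * p s' z y')"
    if "0 < s" "s \<le> T" "0 < s'" "s' \<le> T" for s s' x' y'
  proof (rule Bochner_Integration.integrable_bound)
    show "integrable lborel (\<lambda>z. C * (2 * s' powr (- real CARD('n) / 2)) * p s x' z)"
      using integrable_qa_dominated[OF meas(1) nonneg upper C _ \<beta> \<alpha>] that by simp
    show "(\<lambda>z. p s x' z * p s' z y') \<in> borel_measurable lborel"
      using meas that by (intro borel_measurable_times) auto
    have "p s x' z * p s' z y' \<le> p s x' z * (C * (2 * s' powr (- real CARD('n) / 2)))" for z
    proof (rule mult_left_mono)
      show "p s' z y' \<le> C * (2 * s' powr (- real CARD('n) / 2))"
        using upper[of s' z y'] mult_left_mono[OF qa_le_uniform[of s' \<beta> \<alpha> a "z - y'"] C] \<beta> that by simp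
    qed (use nonneg that in simp)
    then show "AE z in lborel. norm (p s x' z * p s' z y') \<le> norm (C * (2 * s' powr (- real CARD('n) / 2)) * p s x' z)"
      using nonneg that C by (intro AE_I2) (simp add: abs_mult mult.commute)
  qed
  have "c * \<gamma> * t powr (- real DIM(real^'n) / 2) * \<gamma> powr (4 * (norm (x - y))\<^sup>2 / t) \<le> p t x y"
    using diag \<gamma> by (intro gaussian_lower_bound_by_chaining[OF nonneg CK int _ c _ _ _ t]) simp_all
  then show ?thesis by simp
qed

lemma gaussian_lower_bound_of_perturbation_series:
  fixes p :: "real \<Rightarrow> real^'n \<Rightarrow> real^'n \<Rightarrow> real" and T C \<gamma> t \<alpha> \<beta> a :: real
  assumes series: "\<forall>t\<in>{0<..T}. \<forall>x y.
      summable (\<lambda>k. \<bar>pk \<alpha> a b k t x y\<bar>)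
      \<and> (\<Sum>k. \<bar>pk \<alpha> a b k t x y\<bar>) \<le> C * qa \<alpha> a \<beta> t (x - y)
      \<and> ((norm (x - y))\<^sup>2 < t \<longrightarrow> (\<Sum>k. pk \<alpha> a b k t x y) \<ge> t powr (- real CARD('n) / 2) / C)"
    and kernel: "continuous_on ({0<..} \<times> UNIV \<times> UNIV) (\<lambda>(t, x, y). p t x y)
      \<and> (\<forall>t x y. t > 0 \<longrightarrow> p t x y \<ge> 0)
      \<and> (\<forall>t\<in>{0<..T}. \<forall>x y. p t x y = (\<Sum>k. pk \<alpha> a b k t x y))
      \<and> (\<forall>t s x y. t > 0 \<longrightarrow> s > 0 \<longrightarrow> p (t + s) x y = (\<integral>z. p t x z * p s z y \<partial>lborel))"
    and t: "t \<in> {0<..T}"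
    and C: "C \<ge> 1" and \<alpha>: "\<alpha> > 0" and \<beta>: "\<beta> > 0"
    and \<gamma>: "0 < \<gamma>" "\<gamma> < 1" "\<gamma> \<le> unit_ball_vol CARD('n) / (C * 4 ^ CARD('n))"
  shows "\<gamma> / C * t powr (- real CARD('n) / 2) * exp (- (- 4 * ln \<gamma>) * (norm (x - y))\<^sup>2 / t) \<le> p t x y"
proof -
  have cont: "continuous_on ({0<..} \<times> UNIV \<times> UNIV) (\<lambda>(t, x, y). p t x y)"
    and nonneg: "\<And>t x y. t > 0 \<Longrightarrow> 0 \<le> p t x y"
    and CK: "\<And>t s x y. t > 0 \<Longrightarrow> s > 0 \<Longrightarrow> p (t + s) x y = (\<integral>z. p t x z * p s z y \<partial>lborel)"
    and series_sum: "\<And>t x y. t \<in> {0<..T} \<Longrightarrow> p t x y = (\<Sum>k. pk \<alpha> a b k t x y)"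
    using kernel by blast+
  have upper: "p t x y \<le> C * qa \<alpha> a \<beta> t (x - y)" if "0 < t" "t \<le> T" for t x y
  proof -
    have "summable (\<lambda>k. \<bar>pk \<alpha> a b k t x y\<bar>)" "(\<Sum>k. \<bar>pk \<alpha> a b k t x y\<bar>) \<le> C * qa \<alpha> a \<beta> t (x - y)"
      using series that by simp_all
    with series_sum[of t x y] summable_rabs[of "\<lambda>k. pk \<alpha> a b k t x y"] that show ?thesis by simp
  qed
  have diag: "1 / C * t powr (- real CARD('n) / 2) \<le> p t x y"
    if "0 < t" "t \<le> T" "(norm (x - y))\<^sup>2 < t" for t x y
    using series series_sum[of t x y] that by auto
  have "1 / C * \<gamma> * t powr (- real CARD('n) / 2) * \<gamma> powr (4 * (norm (x - y))\<^sup>2 / t) \<le> p t x y"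
    using C \<gamma> t
    by (intro gaussian_lower_bound_of_qa_bounded_kernel[OF cont nonneg CK upper diag _ \<alpha> \<beta>]) auto
  moreover have "\<gamma> powr (4 * (norm (x - y))\<^sup>2 / t) = exp (- (- 4 * ln \<gamma>) * (norm (x - y))\<^sup>2 / t)"
    using \<gamma> by (simp add: powr_def)
  ultimately show ?thesis by simp
qed

theorem lemma5p7:
  fixes \<alpha> M \<beta>U C0 :: real
  assumes dim: "CARD('n) \<ge> 2"
    and alpha: "0 < \<alpha>" "\<alpha> < 2"
    and M: "M > 0"
    and betaU: "\<beta>U > 0"
      "\<forall>M'>0. \<forall>T>0. \<exists>CU>0. \<forall>a\<in>{0<..M'}. \<forall>t\<in>{0<..T}. \<forall>z::real^'n.
          pa \<alpha> a t z \<le> CU * qa \<alpha> a \<beta>U t z"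
    and C0: "C0 \<ge> 1"
  shows "\<exists>C1>0. \<exists>C2>0. \<forall>(b :: real^'n \<Rightarrow> real^'n) tstar (pab :: real \<Rightarrow> real \<Rightarrow> real^'n \<Rightarrow> real^'n \<Rightarrow> real).
     b \<in> kato_class \<and> tstar > 0
     \<and> (\<forall>a\<in>{0<..M}. \<forall>t\<in>{0<..tstar}. \<forall>x y.
           summable (\<lambda>k. \<bar>pk \<alpha> a b k t x y\<bar>)
           \<and> (\<Sum>k. \<bar>pk \<alpha> a b k t x y\<bar>) \<le> C0 * qa \<alpha> a (\<beta>U / 2) t (x - y)
           \<and> ((norm (x - y))\<^sup>2 < t \<longrightarrow> (\<Sum>k. pk \<alpha> a b k t x y) \<ge> t powr (- real CARD('n) / 2) / C0))
     \<and> (\<forall>a\<in>{0<..M}.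
           continuous_on ({0<..} \<times> UNIV \<times> UNIV) (\<lambda>(t, x, y). pab a t x y)
           \<and> (\<forall>t x y. t > 0 \<longrightarrow> pab a t x y \<ge> 0)
           \<and> (\<forall>t\<in>{0<..tstar}. \<forall>x y. pab a t x y = (\<Sum>k. pk \<alpha> a b k t x y))
           \<and> (\<forall>t s x y. t > 0 \<longrightarrow> s > 0 \<longrightarrow>
                pab a (t + s) x y = (\<integral> z. pab a t x z * pab a s z y \<partial>lborel)))
     \<longrightarrow> (\<forall>a\<in>{0<..M}. \<forall>t\<in>{0<..tstar}. \<forall>x y.
            pab a t x y \<ge> C1 * t powr (- real CARD('n) / 2) * exp (- C2 * (norm (x - y))\<^sup>2 / t))"
proof -
  \<comment> \<open>Only the series bounds and the kernel properties enter.\<close>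
  define \<gamma> where "\<gamma> = min (unit_ball_vol CARD('n) / (C0 * 4 ^ CARD('n))) (1 / 2)"
  have \<gamma>: "0 < \<gamma>" "\<gamma> < 1" "\<gamma> \<le> unit_ball_vol CARD('n) / (C0 * 4 ^ CARD('n))"
    using C0 by (auto simp: \<gamma>_def)
  have constants: "\<gamma> / C0 > 0" "- 4 * ln \<gamma> > 0" using \<gamma> C0 by simp_all
  have "\<beta>U / 2 > 0" using betaU(1) by simp
  note lower_bound = gaussian_lower_bound_of_perturbation_series[OF _ _ _ C0 alpha(1) this \<gamma>]
  show ?thesis
    by (rule exI[of _ "\<gamma> / C0"], rule conjI[OF constants(1)], rule exI[of _ "- 4 * ln \<gamma>"],
        rule conjI[OF constants(2)], intro allI impI ballI, elim conjE, rule lower_bound; blast)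
qed

end
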